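(* Let $\mathcal{M}$ be a finite set of users and $\mathcal{R}$ a finite set of resource blocks, with given $\delta_r^k\in\{0,1\}$ and positive integers $d_k$. Let $\mathcal{X}(\mathcal{M})$ denote the set of $\mathbf{x}\in\{0,1\}^{R\times|\mathcal{M}|}$ satisfying $\sum_r x_r^k\ge d_k$ for $k\in\mathcal{M}$, $\sum_k x_r^k\le 1$ for $r\in\mathcal{R}$, and $x_r^k\le\delta_r^k$ for all $(r,k)$. Consider Algorithm 1: draw costs $c_r^k$ independently and uniformly at random from $[0,1]$, and solve the linear program $\min\sum_r\sum_k c_r^k x_r^k$ over the relaxation of $\mathcal{X}(\mathcal{M})$ obtained by replacing $\mathbf{x}\in\{0,1\}^{R\times|\mathcal{M}|}$ with $\mathbf{x}\in[0,1]^{R\times|\mathcal{M}|}$; if the LP is feasible, answer "yes" and return the LP optimal solution $\mathbf{x}^*$ as a schedule, and otherwise answer "no". Then Algorithm 1 always answers correctly whether $\mathcal{X}(\mathcal{M})$ is nonempty, and, when the answer is "yes", with probability $1$ the returned $\mathbf{x}^*$ belongs to $\mathcal{X}(\mathcal{M})$.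
   Context: Binary SNR model of URLLC scheduling: $x_r^k=1$ means block $r$ is assigned to user $k$, $\delta_r^k=1$ means block $r$ is active for user $k$, and user $k$ is satisfied if it receives at least $d_k$ active blocks; each block goes to at most one user. $\mathcal{X}(\mathcal{M})\neq\emptyset$ means the user set $\mathcal{M}$ can be scheduled simultaneously (question Q1). *)

theory Defs
  imports "HOL-Probability.Probability"
begin

definition relaxed_feasible ::
  "'r set \<Rightarrow> 'k set \<Rightarrow> ('r \<Rightarrow> 'k \<Rightarrow> real) \<Rightarrow> ('k \<Rightarrow> nat) \<Rightarrow> ('r \<Rightarrow> 'k \<Rightarrow> real) \<Rightarrow> bool" where
  "relaxed_feasible R M \<delta> d x \<longleftrightarrow>
     (\<forall>r k. (r \<notin> R \<or> k \<notin> M) \<longrightarrow> x r k = 0) \<and>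
     (\<forall>r\<in>R. \<forall>k\<in>M. 0 \<le> x r k \<and> x r k \<le> 1 \<and> x r k \<le> \<delta> r k) \<and>
     (\<forall>k\<in>M. (\<Sum>r\<in>R. x r k) \<ge> real (d k)) \<and>
     (\<forall>r\<in>R. (\<Sum>k\<in>M. x r k) \<le> 1)"

definition sched_set ::
  "'r set \<Rightarrow> 'k set \<Rightarrow> ('r \<Rightarrow> 'k \<Rightarrow> real) \<Rightarrow> ('k \<Rightarrow> nat) \<Rightarrow> ('r \<Rightarrow> 'k \<Rightarrow> real) set" where
  "sched_set R M \<delta> d = {x. relaxed_feasible R M \<delta> d x \<and> (\<forall>r\<in>R. \<forall>k\<in>M. x r k \<in> {0, 1})}"

definition lp_cost :: "'r set \<Rightarrow> 'k set \<Rightarrow> ('r \<times> 'k \<Rightarrow> real) \<Rightarrow> ('r \<Rightarrow> 'k \<Rightarrow> real) \<Rightarrow> real" where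
  "lp_cost R M c x = (\<Sum>r\<in>R. \<Sum>k\<in>M. c (r, k) * x r k)"

definition lp_optimal ::
  "'r set \<Rightarrow> 'k set \<Rightarrow> ('r \<Rightarrow> 'k \<Rightarrow> real) \<Rightarrow> ('k \<Rightarrow> nat) \<Rightarrow> ('r \<times> 'k \<Rightarrow> real) \<Rightarrow> ('r \<Rightarrow> 'k \<Rightarrow> real) \<Rightarrow> bool" where
  "lp_optimal R M \<delta> d c x \<longleftrightarrow> relaxed_feasible R M \<delta> d x \<and>
     (\<forall>y. relaxed_feasible R M \<delta> d y \<longrightarrow> lp_cost R M c x \<le> lp_cost R M c y)"

definition cost_distr :: "'r set \<Rightarrow> 'k set \<Rightarrow> ('r \<times> 'k \<Rightarrow> real) measure" where
  "cost_distr R M = PiM (R \<times> M) (\<lambda>_. uniform_measure lborel {0..1::real})"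

end

theory Submission
  imports Defs
begin

(* A feasible point x of the LP relaxation with a fractional entry is not a vertex. Its fractional
   entries are the edges of a bipartite graph on blocks and users, and a tight block or user
   constraint that meets one fractional entry meets a second one, since the right-hand sides 1 and
   d k are integers. A non-backtracking walk in this graph therefore closes up into a cycle or runs
   between two slack constraints, and counting its edges with sign +1 from block to user and -1
   back gives a direction z in {-1,0,1}^(R x M), z ~= 0, such that x +- t z stays feasible for small t.
   At an optimum this forces the cost c.z to vanish. There are finitely many such z, and each
   hyperplane c.z = 0 is null for independent uniform costs; so almost surely every optimum is
   integral. Optima exist by compactness, and a single generic cost vector already turns a feasible
   relaxation into a schedule. *)

section \<open>Non-backtracking walks\<close>

text \<open>The condition \<open>g 2 \<noteq> g 0\<close> rules out the closed walk \<open>u v u\<close>, whose signed edge count vanishes.\<close>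

definition cycle_or_free_path :: "('v \<Rightarrow> 'v \<Rightarrow> bool) \<Rightarrow> ('v \<Rightarrow> bool) \<Rightarrow> (nat \<Rightarrow> 'v) \<Rightarrow> nat \<Rightarrow> bool" where
  "cycle_or_free_path E T g n \<longleftrightarrow> 0 < n \<and> inj_on g {..<n} \<and> (\<forall>l<n. E (g l) (g (Suc l)))
     \<and> (1 < n \<longrightarrow> g 2 \<noteq> g 0) \<and> (g n = g 0 \<or> \<not> T (g 0) \<and> \<not> T (g n))"

lemma nonbacktracking_walk_exists:
  assumes sym: "\<And>u v. E u v \<Longrightarrow> E v u"
    and branch: "\<And>u v. E u v \<Longrightarrow> T v \<Longrightarrow> \<exists>w. E v w \<and> w \<noteq> u"
    and "E s0 s1"
  shows "\<exists>f. f 0 = s0 \<and> (\<forall>l. E (f l) (f (Suc l))) \<and> (\<forall>l. T (f (Suc l)) \<longrightarrow> f (Suc (Suc l)) \<noteq> f l)"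
proof -
  define next_vertex where "next_vertex u v = (SOME w. E v w \<and> (T v \<longrightarrow> w \<noteq> u))" for u v
  have next_vertex: "E v (next_vertex u v) \<and> (T v \<longrightarrow> next_vertex u v \<noteq> u)" if "E u v" for u v
  proof -
    have "\<exists>w. E v w \<and> (T v \<longrightarrow> w \<noteq> u)"
      using sym[OF that] branch[OF that] by blast
    then show ?thesis unfolding next_vertex_def by (rule someI_ex)
  qed
  define edge where "edge n = ((\<lambda>(u, v). (v, next_vertex u v)) ^^ n) (s0, s1)" for n
  have edge_0: "edge 0 = (s0, s1)" and
    edge_Suc: "edge (Suc n) = (snd (edge n), next_vertex (fst (edge n)) (snd (edge n)))" for n
    by (simp_all add: edge_def case_prod_beta)
  have edge_adj: "E (fst (edge n)) (snd (edge n))" for n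
    by (induction n) (simp_all add: edge_0 edge_Suc \<open>E s0 s1\<close> next_vertex)
  show ?thesis
    using next_vertex[OF edge_adj] edge_adj
    by (intro exI[of _ "\<lambda>n. fst (edge n)"]) (simp add: edge_0 edge_Suc)
qed

lemma nonbacktracking_walk_cycle_or_free_path:
  fixes f :: "nat \<Rightarrow> 'v"
  assumes "finite V" and in_V: "\<And>l. f l \<in> V"
    and walk: "\<And>l. E (f l) (f (Suc l))"
    and nonbacktracking: "\<And>l. T (f (Suc l)) \<Longrightarrow> f (Suc (Suc l)) \<noteq> f l"
    and start: "\<not> T (f 0) \<or> (\<forall>l. T (f l))"
  shows "\<exists>g n. cycle_or_free_path E T g n"
proof -
  define stop where "stop j \<longleftrightarrow> 0 < j \<and> (f j \<in> f ` {..<j} \<or> \<not> T (f j))" for j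
  have "\<not> inj_on f {..card V}"
  proof (rule pigeonhole)
    have "card (f ` {..card V}) \<le> card V"
      using in_V \<open>finite V\<close> by (intro card_mono) auto
    then show "card (f ` {..card V}) < card {..card V}" by simp
  qed
  then obtain i j where "i < j" "f i = f j"
    unfolding inj_on_def by (metis atMost_iff linorder_neqE_nat)
  then have "stop j" unfolding stop_def by (auto intro!: image_eqI[of _ f i])
  define j0 where "j0 = (LEAST j. stop j)"
  have "stop j0" unfolding j0_def by (rule LeastI) fact
  have not_stop: "\<not> stop l" if "l < j0" for l
    using that unfolding j0_def by (rule not_less_Least)
  have fresh: "f q \<notin> f ` {..<q}" if "q < j0" for q
    using not_stop[OF that] unfolding stop_def by (cases "q = 0") auto
  have inj: "inj_on f {..<j0}"
  proof (rule inj_onI)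
    fix p q assume pq: "p \<in> {..<j0}" "q \<in> {..<j0}" "f p = f q"
    have "f q \<in> f ` {..<q}" if "p < q" using that pq(3) by (intro rev_image_eqI[of p]) auto
    moreover have "f p \<in> f ` {..<p}" if "q < p" using that pq(3) by (intro rev_image_eqI[of q]) auto
    ultimately show "p = q" using fresh pq(1,2) by (meson lessThan_iff linorder_neqE_nat)
  qed
  have tight: "T (f l)" if "0 < l" "l < j0" for l
    using not_stop[OF that(2)] that(1) unfolding stop_def by blast
  obtain a where "a < j0" and ends: "f j0 = f a \<or> a = 0 \<and> \<not> T (f 0) \<and> \<not> T (f j0)"
  proof (cases "f j0 \<in> f ` {..<j0}")
    case True
    then obtain i where "i < j0" "f j0 = f i" by auto
    then show ?thesis using that by blast
  next
    case False
    then have "\<not> T (f j0)" "0 < j0" using \<open>stop j0\<close> unfolding stop_def by auto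
    then show ?thesis using that[of 0] start by blast
  qed
  have "inj_on (\<lambda>l. f (a + l)) {..<j0 - a}"
  proof (rule inj_onI)
    fix p q assume "p \<in> {..<j0 - a}" "q \<in> {..<j0 - a}" "f (a + p) = f (a + q)"
    then have "a + p = a + q" by (intro inj_onD[OF inj]) auto
    then show "p = q" by simp
  qed
  moreover have "1 < j0 - a \<longrightarrow> f (a + 2) \<noteq> f (a + 0)"
    using nonbacktracking[of a] tight[of "Suc a"] by (simp add: numeral_2_eq_2)
  moreover have "f (a + (j0 - a)) = f (a + 0) \<or> \<not> T (f (a + 0)) \<and> \<not> T (f (a + (j0 - a)))"
    using \<open>a < j0\<close> ends by auto
  ultimately show ?thesis
    using \<open>a < j0\<close> walk unfolding cycle_or_free_path_def
    by (intro exI[of _ "\<lambda>l. f (a + l)"] exI[of _ "j0 - a"]) simp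
qed

lemma cycle_or_free_path_exists:
  assumes "finite V" and in_V: "\<And>u v. E u v \<Longrightarrow> v \<in> V"
    and sym: "\<And>u v. E u v \<Longrightarrow> E v u"
    and branch: "\<And>u v. E u v \<Longrightarrow> T v \<Longrightarrow> \<exists>w. E v w \<and> w \<noteq> u"
    and "E s0 s1"
  shows "\<exists>g n. cycle_or_free_path E T g n"
proof -
  \<comment> \<open>Start at a vertex outside \<open>T\<close> if there is one, so that a walk stopped there has both ends outside \<open>T\<close>.\<close>
  obtain u v where "E u v" and start: "\<not> T u \<or> (\<forall>u v. E u v \<longrightarrow> T u)"
  proof (cases "\<exists>u v. E u v \<and> \<not> T u")
    case True
    then show ?thesis using that by blast
  next
    case False
    then show ?thesis using that[OF \<open>E s0 s1\<close>] by blast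
  qed
  obtain f where "f 0 = u" and walk: "\<And>l. E (f l) (f (Suc l))"
    and nonbacktracking: "\<And>l. T (f (Suc l)) \<Longrightarrow> f (Suc (Suc l)) \<noteq> f l"
    using nonbacktracking_walk_exists[of E T, OF sym branch \<open>E u v\<close>] by blast
  have f_in_V: "f l \<in> V" for l
    using in_V[OF sym[OF walk[of l]]] .
  have "\<not> T (f 0) \<or> (\<forall>l. T (f l))"
    using start walk \<open>f 0 = u\<close> by blast
  with \<open>finite V\<close> f_in_V walk nonbacktracking show ?thesis
    by (rule nonbacktracking_walk_cycle_or_free_path)
qed

section \<open>Signed edge counts of walks in a bipartite graph\<close>

definition bipartite_adj :: "('r \<Rightarrow> 'k \<Rightarrow> bool) \<Rightarrow> 'r + 'k \<Rightarrow> 'r + 'k \<Rightarrow> bool" where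
  "bipartite_adj P u v \<longleftrightarrow> (\<exists>r k. P r k \<and> (u = Inl r \<and> v = Inr k \<or> u = Inr k \<and> v = Inl r))"

lemma bipartite_adj_simps [simp]:
  "bipartite_adj P (Inl r) (Inr k) \<longleftrightarrow> P r k" "bipartite_adj P (Inr k) (Inl r) \<longleftrightarrow> P r k"
  "\<not> bipartite_adj P (Inl r) (Inl r')" "\<not> bipartite_adj P (Inr k) (Inr k')"
  by (auto simp: bipartite_adj_def)

lemma bipartite_adj_sym: "bipartite_adj P u v \<Longrightarrow> bipartite_adj P v u"
  by (auto simp: bipartite_adj_def)

definition edge_count :: "(nat \<Rightarrow> 'v) \<Rightarrow> nat \<Rightarrow> 'v \<Rightarrow> 'v \<Rightarrow> real" where
  "edge_count g n u v = (\<Sum>l<n. of_bool (g l = u \<and> g (Suc l) = v))"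

lemma edge_count_eq_0_iff: "edge_count g n u v = 0 \<longleftrightarrow> (\<forall>l<n. \<not> (g l = u \<and> g (Suc l) = v))"
  by (auto simp: edge_count_def sum_nonneg_eq_0_iff)

lemma edge_count_inj_on:
  assumes "inj_on g {..<n}"
  shows "edge_count g n u v \<in> {0, 1}"
proof -
  have "card ({..<n} \<inter> {l. g l = u \<and> g (Suc l) = v}) \<le> 1"
    unfolding One_nat_def using assms by (subst card_le_Suc0_iff_eq) (auto dest: inj_onD)
  then show ?thesis
    by (auto simp: edge_count_def le_Suc_eq)
qed

lemma edge_count_first_edge:
  assumes "0 < n" and "inj_on g {..<n}" and "g 1 \<noteq> g 0" and "1 < n \<longrightarrow> g 2 \<noteq> g 0"
  shows "edge_count g n (g 0) (g 1) = 1" and "edge_count g n (g 1) (g 0) = 0"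
proof -
  have "edge_count g n (g 0) (g 1) \<noteq> 0"
    using \<open>0 < n\<close> by (auto simp: edge_count_eq_0_iff)
  then show "edge_count g n (g 0) (g 1) = 1"
    using edge_count_inj_on[OF assms(2)] by auto
  have "l = 1" if "l < n" "g l = g 1" "g (Suc l) = g 0" for l
    using that assms by (cases l) (auto dest: inj_onD)
  then show "edge_count g n (g 1) (g 0) = 0"
    using assms by (auto simp: edge_count_eq_0_iff numeral_2_eq_2)
qed

lemma sum_of_bool_eq_member:
  "finite W \<Longrightarrow> (\<Sum>v\<in>W. of_bool (P \<and> x = v) :: 'a :: comm_semiring_1) = of_bool (P \<and> x \<in> W)"
  by (cases P) (simp_all add: of_bool_def)

lemma walk_net_outflow:
  assumes "finite W"
    and out: "\<And>l. l < n \<Longrightarrow> g l = u \<Longrightarrow> g (Suc l) \<in> W"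
    and into: "\<And>l. l < n \<Longrightarrow> g (Suc l) = u \<Longrightarrow> g l \<in> W"
  shows "(\<Sum>v\<in>W. edge_count g n u v - edge_count g n v u) = of_bool (g 0 = u) - of_bool (g n = u)"
proof -
  have "(\<Sum>v\<in>W. edge_count g n u v - edge_count g n v u)
      = (\<Sum>l<n. \<Sum>v\<in>W. of_bool (g l = u \<and> g (Suc l) = v) - of_bool (g (Suc l) = u \<and> g l = v))"
    unfolding edge_count_def sum_subtractf by (subst (1 2) sum.swap) (simp add: conj_commute)
  also have "\<dots> = (\<Sum>l<n. of_bool (g l = u) - of_bool (g (Suc l) = u))"
    using out into by (intro sum.cong refl) (auto simp: sum_subtractf sum_of_bool_eq_member[OF \<open>finite W\<close>])
  also have "\<dots> = of_bool (g 0 = u) - of_bool (g n = u)"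
    by (rule sum_lessThan_telescope')
  finally show ?thesis .
qed

definition walk_flow :: "(nat \<Rightarrow> 'r + 'k) \<Rightarrow> nat \<Rightarrow> 'r \<Rightarrow> 'k \<Rightarrow> real" where
  "walk_flow g n r k = edge_count g n (Inl r) (Inr k) - edge_count g n (Inr k) (Inl r)"

context
  fixes P :: "'r \<Rightarrow> 'k \<Rightarrow> bool" and g :: "nat \<Rightarrow> 'r + 'k" and n :: nat
  assumes walk: "\<forall>l<n. bipartite_adj P (g l) (g (Suc l))"
begin

lemma walk_flow_nonzero_imp:
  assumes "walk_flow g n r k \<noteq> 0"
  shows "P r k"
proof -
  have "edge_count g n (Inl r) (Inr k) \<noteq> 0 \<or> edge_count g n (Inr k) (Inl r) \<noteq> 0"
    using assms by (auto simp: walk_flow_def)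
  then obtain l where "l < n" and "g l = Inl r \<and> g (Suc l) = Inr k \<or> g l = Inr k \<and> g (Suc l) = Inl r"
    by (auto simp: edge_count_eq_0_iff)
  then show ?thesis using walk by auto
qed

lemma walk_flow_row_sum:
  assumes "finite M" and "\<And>r k. P r k \<Longrightarrow> k \<in> M"
  shows "(\<Sum>k\<in>M. walk_flow g n r k) = of_bool (g 0 = Inl r) - of_bool (g n = Inl r)"
proof -
  have "(\<Sum>k\<in>M. walk_flow g n r k)
      = (\<Sum>v\<in>Inr ` M. edge_count g n (Inl r) v - edge_count g n v (Inl r))"
    by (simp add: sum.reindex walk_flow_def)
  also have "\<dots> = of_bool (g 0 = Inl r) - of_bool (g n = Inl r)"
  proof (rule walk_net_outflow)
    fix l assume "l < n"
    show "g l = Inl r \<Longrightarrow> g (Suc l) \<in> Inr ` M" "g (Suc l) = Inl r \<Longrightarrow> g l \<in> Inr ` M"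
      using walk \<open>l < n\<close> assms(2) by (cases "g l"; cases "g (Suc l)"; auto)+
  qed (use assms in simp)
  finally show ?thesis .
qed

lemma walk_flow_column_sum:
  assumes "finite R" and "\<And>r k. P r k \<Longrightarrow> r \<in> R"
  shows "(\<Sum>r\<in>R. walk_flow g n r k) = of_bool (g n = Inr k) - of_bool (g 0 = Inr k)"
proof -
  have "(\<Sum>r\<in>R. walk_flow g n r k)
      = - (\<Sum>v\<in>Inl ` R. edge_count g n (Inr k) v - edge_count g n v (Inr k))"
    by (simp add: sum.reindex walk_flow_def sum_subtractf)
  also have "\<dots> = of_bool (g n = Inr k) - of_bool (g 0 = Inr k)"
  proof (subst walk_net_outflow)
    fix l assume "l < n"
    show "g l = Inr k \<Longrightarrow> g (Suc l) \<in> Inl ` R" "g (Suc l) = Inr k \<Longrightarrow> g l \<in> Inl ` R"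
      using walk \<open>l < n\<close> assms(2) by (cases "g l"; cases "g (Suc l)"; auto)+
  qed (use assms in simp_all)
  finally show ?thesis .
qed

lemma walk_flow_inj_on:
  assumes "inj_on g {..<n}"
  shows "walk_flow g n r k \<in> {-1, 0, 1}"
  using edge_count_inj_on[OF assms, of "Inl r" "Inr k"] edge_count_inj_on[OF assms, of "Inr k" "Inl r"]
  by (auto simp: walk_flow_def)

lemma walk_flow_nonzero:
  assumes "0 < n" and "inj_on g {..<n}" and "1 < n \<longrightarrow> g 2 \<noteq> g 0"
  shows "\<exists>r k. walk_flow g n r k \<noteq> 0"
proof -
  have "bipartite_adj P (g 0) (g 1)" using walk \<open>0 < n\<close> by simp
  then have "g 1 \<noteq> g 0" by (auto simp: bipartite_adj_def)
  note first = edge_count_first_edge[OF assms(1,2) this assms(3)]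
  show ?thesis
  proof (cases "g 0")
    case (Inl r)
    then obtain k where "g 1 = Inr k"
      using \<open>bipartite_adj P (g 0) (g 1)\<close> by (cases "g 1") auto
    then show ?thesis using first Inl by (intro exI[of _ r] exI[of _ k]) (simp add: walk_flow_def)
  next
    case (Inr k)
    then obtain r where "g 1 = Inl r"
      using \<open>bipartite_adj P (g 0) (g 1)\<close> by (cases "g 1") auto
    then show ?thesis using first Inr by (intro exI[of _ r] exI[of _ k]) (simp add: walk_flow_def)
  qed
qed

end

section \<open>Feasible directions at fractional points\<close>

lemma exists_other_fractional:
  fixes g :: "'a \<Rightarrow> real"
  assumes "finite S" and "i \<in> S" and unit: "\<And>j. j \<in> S \<Longrightarrow> 0 \<le> g j \<and> g j \<le> 1"
    and "0 < g i" and "g i < 1" and "(\<Sum>j\<in>S. g j) \<in> \<int>"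
  shows "\<exists>j\<in>S. j \<noteq> i \<and> 0 < g j \<and> g j < 1"
proof (rule ccontr)
  assume "\<not> ?thesis"
  then have "g j \<in> \<int>" if "j \<in> S - {i}" for j
    using unit[of j] that by (auto simp: order_le_less)
  then have "(\<Sum>j\<in>S - {i}. g j) \<in> \<int>" by (rule Ints_sum)
  moreover have "(\<Sum>j\<in>S. g j) = g i + (\<Sum>j\<in>S - {i}. g j)"
    using \<open>finite S\<close> \<open>i \<in> S\<close> by (rule sum.remove)
  ultimately have "g i \<in> \<int>" using \<open>(\<Sum>j\<in>S. g j) \<in> \<int>\<close> by (metis Ints_diff add_diff_cancel_right')
  then show False using \<open>0 < g i\<close> \<open>g i < 1\<close> by (auto elim!: Ints_cases)
qed

lemma eventually_affine_le_nhds_0: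
  fixes a b c :: real
  shows "a \<le> c \<Longrightarrow> (a = c \<Longrightarrow> b = 0) \<Longrightarrow> \<forall>\<^sub>F t in nhds 0. a + t * b \<le> c"
    and "c \<le> a \<Longrightarrow> (a = c \<Longrightarrow> b = 0) \<Longrightarrow> \<forall>\<^sub>F t in nhds 0. c \<le> a + t * b"
proof -
  have "((\<lambda>t. a + t * b) \<longlongrightarrow> a + 0 * b) (nhds 0)"
    by (intro tendsto_intros filterlim_ident)
  then have lim: "((\<lambda>t. a + t * b) \<longlongrightarrow> a) (nhds 0)" by simp
  show "a \<le> c \<Longrightarrow> (a = c \<Longrightarrow> b = 0) \<Longrightarrow> \<forall>\<^sub>F t in nhds 0. a + t * b \<le> c"
    using order_tendstoD(2)[OF lim, of c] by (cases "a = c") (auto elim: eventually_mono)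
  show "c \<le> a \<Longrightarrow> (a = c \<Longrightarrow> b = 0) \<Longrightarrow> \<forall>\<^sub>F t in nhds 0. c \<le> a + t * b"
    using order_tendstoD(1)[OF lim, of c] by (cases "a = c") (auto elim: eventually_mono)
qed

definition fractional_entry :: "'r set \<Rightarrow> 'k set \<Rightarrow> ('r \<Rightarrow> 'k \<Rightarrow> real) \<Rightarrow> 'r \<Rightarrow> 'k \<Rightarrow> bool" where
  "fractional_entry R M x r k \<longleftrightarrow> r \<in> R \<and> k \<in> M \<and> 0 < x r k \<and> x r k < 1"

definition tight_constraint :: "'r set \<Rightarrow> 'k set \<Rightarrow> ('k \<Rightarrow> nat) \<Rightarrow> ('r \<Rightarrow> 'k \<Rightarrow> real) \<Rightarrow> 'r + 'k \<Rightarrow> bool" where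
  "tight_constraint R M d x = case_sum (\<lambda>r. (\<Sum>k\<in>M. x r k) = 1) (\<lambda>k. (\<Sum>r\<in>R. x r k) = d k)"

lemma eventually_relaxed_feasible_add:
  fixes x z :: "'r \<Rightarrow> 'k \<Rightarrow> real"
  assumes "finite R" and "finite M" and \<delta>: "\<forall>r k. \<delta> r k \<in> {0, 1}"
    and feasible: "relaxed_feasible R M \<delta> d x"
    and support: "\<And>r k. z r k \<noteq> 0 \<Longrightarrow> fractional_entry R M x r k"
    and row: "\<And>r. r \<in> R \<Longrightarrow> tight_constraint R M d x (Inl r) \<Longrightarrow> (\<Sum>k\<in>M. z r k) = 0"
    and column: "\<And>k. k \<in> M \<Longrightarrow> tight_constraint R M d x (Inr k) \<Longrightarrow> (\<Sum>r\<in>R. z r k) = 0"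
  shows "\<forall>\<^sub>F t in nhds 0. relaxed_feasible R M \<delta> d (\<lambda>r k. x r k + t * z r k)"
proof -
  note x = feasible[unfolded relaxed_feasible_def]
  have outside: "\<forall>r k. (r \<notin> R \<or> k \<notin> M) \<longrightarrow> x r k + t * z r k = 0" for t
    using x support by (auto simp: fractional_entry_def)
  have "\<forall>\<^sub>F t in nhds 0. 0 \<le> x r k + t * z r k \<and> x r k + t * z r k \<le> 1 \<and> x r k + t * z r k \<le> \<delta> r k"
    if "r \<in> R" "k \<in> M" for r k
  proof -
    have "z r k = 0" if "x r k = 0 \<or> x r k = 1 \<or> x r k = \<delta> r k"
    proof (rule ccontr)
      assume "z r k \<noteq> 0"
      then have "0 < x r k" "x r k < 1" using support by (auto simp: fractional_entry_def)
      moreover have "\<delta> r k = 0 \<or> \<delta> r k = 1" using \<delta> by simp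
      ultimately show False using that by auto
    qed
    then show ?thesis
      using x \<open>r \<in> R\<close> \<open>k \<in> M\<close> by (intro eventually_conj eventually_affine_le_nhds_0) auto
  qed
  then have entries: "\<forall>\<^sub>F t in nhds 0. \<forall>r\<in>R. \<forall>k\<in>M.
      0 \<le> x r k + t * z r k \<and> x r k + t * z r k \<le> 1 \<and> x r k + t * z r k \<le> \<delta> r k"
    using assms(1,2) by (intro eventually_ball_finite ballI) auto
  have "\<forall>\<^sub>F t in nhds 0. real (d k) \<le> (\<Sum>r\<in>R. x r k) + t * (\<Sum>r\<in>R. z r k)" if "k \<in> M" for k
    using x column[OF that] that by (intro eventually_affine_le_nhds_0) (auto simp: tight_constraint_def)
  then have columns: "\<forall>\<^sub>F t in nhds 0. \<forall>k\<in>M. real (d k) \<le> (\<Sum>r\<in>R. x r k + t * z r k)"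
    using assms(2) by (intro eventually_ball_finite) (auto simp: sum.distrib sum_distrib_left)
  have "\<forall>\<^sub>F t in nhds 0. (\<Sum>k\<in>M. x r k) + t * (\<Sum>k\<in>M. z r k) \<le> 1" if "r \<in> R" for r
    using x row[OF that] that by (intro eventually_affine_le_nhds_0) (auto simp: tight_constraint_def)
  then have rows: "\<forall>\<^sub>F t in nhds 0. \<forall>r\<in>R. (\<Sum>k\<in>M. x r k + t * z r k) \<le> 1"
    using assms(1) by (intro eventually_ball_finite) (auto simp: sum.distrib sum_distrib_left)
  from entries columns rows show ?thesis
    unfolding relaxed_feasible_def by eventually_elim (use outside in blast)
qed

lemma tight_constraint_branches:
  assumes "finite R" and "finite M" and feasible: "relaxed_feasible R M \<delta> d x"
    and adj: "bipartite_adj (fractional_entry R M x) u v" and tight: "tight_constraint R M d x v"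
  shows "\<exists>w. bipartite_adj (fractional_entry R M x) v w \<and> w \<noteq> u"
proof -
  note x = feasible[unfolded relaxed_feasible_def]
  have unit: "0 \<le> x r k \<and> x r k \<le> 1" if "r \<in> R" "k \<in> M" for r k using x that by blast
  show ?thesis
  proof (cases v)
    case (Inl r)
    then obtain k where "u = Inr k" and frac: "fractional_entry R M x r k" using adj by (cases u) auto
    moreover have "(\<Sum>k\<in>M. x r k) \<in> \<int>" using tight Inl by (simp add: tight_constraint_def)
    ultimately obtain k' where "k' \<in> M" "k' \<noteq> k" "0 < x r k'" "x r k' < 1"
      using exists_other_fractional[of M k "x r"] unit \<open>finite M\<close> by (auto simp: fractional_entry_def)
    then show ?thesis
      using Inl \<open>u = Inr k\<close> frac by (intro exI[of _ "Inr k'"]) (simp add: fractional_entry_def)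
  next
    case (Inr k)
    then obtain r where "u = Inl r" and frac: "fractional_entry R M x r k" using adj by (cases u) auto
    moreover have "(\<Sum>r\<in>R. x r k) \<in> \<int>" using tight Inr by (simp add: tight_constraint_def)
    ultimately obtain r' where "r' \<in> R" "r' \<noteq> r" "0 < x r' k" "x r' k < 1"
      using exists_other_fractional[of R r "\<lambda>r. x r k"] unit \<open>finite R\<close> by (auto simp: fractional_entry_def)
    then show ?thesis
      using Inr \<open>u = Inl r\<close> frac by (intro exI[of _ "Inl r'"]) (simp add: fractional_entry_def)
  qed
qed

definition sign_directions :: "'r set \<Rightarrow> 'k set \<Rightarrow> ('r \<Rightarrow> 'k \<Rightarrow> real) set" where
  "sign_directions R M = {z. (\<forall>r k. z r k \<in> {-1, 0, 1}) \<and> (\<forall>r k. r \<notin> R \<or> k \<notin> M \<longrightarrow> z r k = 0)}"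

lemma fractional_relaxed_feasible_direction:
  fixes x :: "'r \<Rightarrow> 'k \<Rightarrow> real"
  assumes "finite R" and "finite M" and \<delta>: "\<forall>r k. \<delta> r k \<in> {0, 1}"
    and feasible: "relaxed_feasible R M \<delta> d x"
    and "r0 \<in> R" and "k0 \<in> M" and "x r0 k0 \<notin> {0, 1}"
  shows "\<exists>z\<in>sign_directions R M. (\<exists>r\<in>R. \<exists>k\<in>M. z r k \<noteq> 0) \<and>
           (\<forall>\<^sub>F t in nhds 0. relaxed_feasible R M \<delta> d (\<lambda>r k. x r k + t * z r k))"
proof -
  let ?P = "fractional_entry R M x" and ?T = "tight_constraint R M d x"
  have "\<exists>g n. cycle_or_free_path (bipartite_adj ?P) ?T g n"
  proof (rule cycle_or_free_path_exists)
    show "finite (Inl ` R \<union> Inr ` M)" using assms(1,2) by simp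
    show "v \<in> Inl ` R \<union> Inr ` M" if "bipartite_adj ?P u v" for u v
      using that by (auto simp: bipartite_adj_def fractional_entry_def)
    show "bipartite_adj ?P (Inl r0) (Inr k0)"
      using feasible \<open>r0 \<in> R\<close> \<open>k0 \<in> M\<close> \<open>x r0 k0 \<notin> {0, 1}\<close>
      by (force simp: relaxed_feasible_def fractional_entry_def)
  qed (use bipartite_adj_sym tight_constraint_branches[OF assms(1,2) feasible] in blast)+
  then obtain g n where "0 < n" and inj: "inj_on g {..<n}" and walk: "\<forall>l<n. bipartite_adj ?P (g l) (g (Suc l))"
    and "1 < n \<longrightarrow> g 2 \<noteq> g 0" and ends: "g n = g 0 \<or> \<not> ?T (g 0) \<and> \<not> ?T (g n)"
    unfolding cycle_or_free_path_def by blast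
  have support: "walk_flow g n r k \<noteq> 0 \<Longrightarrow> ?P r k" for r k
    using walk_flow_nonzero_imp[OF walk] .
  have "walk_flow g n \<in> sign_directions R M"
    using walk_flow_inj_on[OF walk inj] support by (auto simp: sign_directions_def fractional_entry_def)
  moreover have "\<exists>r\<in>R. \<exists>k\<in>M. walk_flow g n r k \<noteq> 0"
    using walk_flow_nonzero[OF walk \<open>0 < n\<close> inj \<open>1 < n \<longrightarrow> g 2 \<noteq> g 0\<close>] support
    by (auto simp: fractional_entry_def)
  moreover have "\<forall>\<^sub>F t in nhds 0. relaxed_feasible R M \<delta> d (\<lambda>r k. x r k + t * walk_flow g n r k)"
  proof (rule eventually_relaxed_feasible_add[OF assms(1-4) support])
    show "(\<Sum>k\<in>M. walk_flow g n r k) = 0" if "?T (Inl r)" for r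
      using walk_flow_row_sum[OF walk \<open>finite M\<close>] ends that by (auto simp: fractional_entry_def)
    show "(\<Sum>r\<in>R. walk_flow g n r k) = 0" if "?T (Inr k)" for k
      using walk_flow_column_sum[OF walk \<open>finite R\<close>] ends that by (auto simp: fractional_entry_def)
  qed
  ultimately show ?thesis by blast
qed

section \<open>Generic costs and optimal solutions\<close>

lemma AE_PiM_linear_form_nonzero:
  fixes N :: "real measure" and w :: "'i \<Rightarrow> real"
  assumes "sigma_finite_measure N" and sets_N: "sets N = sets borel" and diffuse: "\<And>v. emeasure N {v} = 0"
    and "finite I" and "i \<in> I" and "w i \<noteq> 0"
  shows "AE c in PiM I (\<lambda>_. N). (\<Sum>j\<in>I. c j * w j) \<noteq> 0"
proof -
  interpret product_sigma_finite "\<lambda>_. N"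
    using assms(1) by (simp add: product_sigma_finite_def)
  define J where "J = I - {i}"
  have I: "I = insert i J" "i \<notin> J" "finite J" using \<open>i \<in> I\<close> \<open>finite I\<close> by (auto simp: J_def)
  define Z where "Z = {c \<in> space (PiM I (\<lambda>_. N)). (\<Sum>j\<in>I. c j * w j) = 0}"
  have "(\<lambda>c. c j) \<in> borel_measurable (PiM I (\<lambda>_. N))" if "j \<in> I" for j
    using measurable_component_singleton[OF that, of "\<lambda>_. N"] by (simp add: measurable_cong_sets[OF refl sets_N])
  then have "(\<lambda>c. \<Sum>j\<in>I. c j * w j) \<in> borel_measurable (PiM I (\<lambda>_. N))"
    by (intro borel_measurable_sum borel_measurable_times) simp_all
  then have Z: "Z \<in> sets (PiM I (\<lambda>_. N))"
    unfolding Z_def by measurable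
  have "emeasure (PiM I (\<lambda>_. N)) Z = (\<integral>\<^sup>+ c. indicator Z c \<partial>PiM (insert i J) (\<lambda>_. N))"
    using Z by (simp add: I(1))
  also have "\<dots> = (\<integral>\<^sup>+ c. (\<integral>\<^sup>+ y. indicator Z (c(i := y)) \<partial>N) \<partial>PiM J (\<lambda>_. N))"
    using Z I by (intro product_nn_integral_insert) simp_all
  also have "\<dots> = (\<integral>\<^sup>+ c. 0 \<partial>PiM J (\<lambda>_. N))"
  proof (rule nn_integral_cong)
    fix c
    define v where "v = - (\<Sum>j\<in>J. c j * w j) / w i"
    have "(\<Sum>j\<in>I. (c(i := y)) j * w j) = y * w i + (\<Sum>j\<in>J. c j * w j)" for y
      using I by (simp add: sum.insert) (intro sum.cong refl, auto)
    then have "indicator Z (c(i := y)) \<le> (indicator {v} y :: ennreal)" for y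
      using \<open>w i \<noteq> 0\<close> by (auto simp: Z_def v_def indicator_def field_simps)
    then have "(\<integral>\<^sup>+ y. indicator Z (c(i := y)) \<partial>N) \<le> (\<integral>\<^sup>+ y. indicator {v} y \<partial>N)"
      by (intro nn_integral_mono)
    also have "\<dots> = emeasure N {v}" using sets_N by simp
    finally show "(\<integral>\<^sup>+ y. indicator Z (c(i := y)) \<partial>N) = 0"
      using diffuse by simp
  qed
  finally have "emeasure (PiM I (\<lambda>_. N)) Z = 0" by simp
  then show ?thesis
    using Z by (subst AE_iff_measurable[OF Z]) (auto simp: Z_def)
qed

lemma compact_pointwise_bounded:
  fixes B :: "'a \<Rightarrow> 'b \<Rightarrow> 'c::topological_space set"
  assumes "\<And>r k. compact (B r k)"
  shows "compact {x. \<forall>r k. x r k \<in> B r k}"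
proof -
  have "compact (PiE UNIV (B r))" for r
    using assms compactin_PiE[of "\<lambda>_. euclidean" UNIV "B r"] by (simp add: euclidean_product_topology)
  then have "compact (PiE UNIV (\<lambda>r. PiE UNIV (B r)))"
    using compactin_PiE[of "\<lambda>_. euclidean" UNIV "\<lambda>r. PiE UNIV (B r)"] by (simp add: euclidean_product_topology)
  moreover have "PiE UNIV (\<lambda>r. PiE UNIV (B r)) = {x. \<forall>r k. x r k \<in> B r k}"
    by (auto simp: PiE_UNIV_domain)
  ultimately show ?thesis by simp
qed

lemma continuous_on_component2 [continuous_intros]:
  "continuous_on S (\<lambda>x :: 'a \<Rightarrow> 'b \<Rightarrow> 'c::topological_space. x r k)"
  by (rule continuous_on_subset[OF continuous_on_product_then_coordinatewise[OF continuous_on_product_coordinates]]) simp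

lemma closed_relaxed_feasible: "closed {x. relaxed_feasible R M \<delta> d x}"
  unfolding relaxed_feasible_def Ball_def
  by (intro closed_Collect_conj closed_Collect_all closed_Collect_imp open_Collect_const
      closed_Collect_le closed_Collect_eq continuous_intros)

lemma lp_optimal_exists:
  assumes "relaxed_feasible R M \<delta> d y"
  shows "\<exists>x. lp_optimal R M \<delta> d c x"
proof -
  define F where "F = {x. relaxed_feasible R M \<delta> d x}"
  define K where "K = {x. \<forall>r k. x r k \<in> (if r \<in> R \<and> k \<in> M then {0..1} else {0::real})}"
  have "compact (K \<inter> F)"
    unfolding K_def F_def by (intro compact_Int_closed compact_pointwise_bounded closed_relaxed_feasible) auto
  moreover have "K \<inter> F = F"
    unfolding K_def F_def relaxed_feasible_def by auto
  ultimately have "compact F" by simp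
  moreover have "continuous_on F (lp_cost R M c)"
    unfolding lp_cost_def by (intro continuous_intros)
  ultimately obtain x where "x \<in> F" "\<forall>y\<in>F. lp_cost R M c x \<le> lp_cost R M c y"
    using continuous_attains_inf[of F] assms unfolding F_def by blast
  then show ?thesis unfolding lp_optimal_def F_def by auto
qed

lemma lp_cost_add:
  "lp_cost R M c (\<lambda>r k. x r k + t * z r k) = lp_cost R M c x + t * lp_cost R M c z"
  by (simp add: lp_cost_def algebra_simps sum.distrib sum_distrib_left)

lemma lp_optimal_two_sided_direction:
  assumes "lp_optimal R M \<delta> d c x"
    and "\<forall>\<^sub>F t in nhds 0. relaxed_feasible R M \<delta> d (\<lambda>r k. x r k + t * z r k)"
  shows "lp_cost R M c z = 0"
proof -
  obtain e :: real where "e > 0" and e: "\<And>t. \<bar>t\<bar> < e \<Longrightarrow> relaxed_feasible R M \<delta> d (\<lambda>r k. x r k + t * z r k)"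
    using assms(2) by (auto simp: eventually_nhds_metric dist_real_def)
  have "lp_cost R M c x \<le> lp_cost R M c (\<lambda>r k. x r k + t * z r k)" if "\<bar>t\<bar> < e" for t
    using assms(1) e[OF that] unfolding lp_optimal_def by blast
  then have "lp_cost R M c x \<le> lp_cost R M c x + t * lp_cost R M c z" if "\<bar>t\<bar> < e" for t
    using that by (simp add: lp_cost_add)
  from this[of "e / 2"] this[of "- e / 2"] show ?thesis
    using \<open>e > 0\<close> by (simp add: mult_le_0_iff zero_le_mult_iff)
qed

lemma finite_sign_directions:
  assumes "finite R" and "finite M"
  shows "finite (sign_directions R M)"
proof (rule finite_subset)
  show "sign_directions R M \<subseteq> (\<lambda>g r k. if r \<in> R \<and> k \<in> M then g (r, k) else 0) ` PiE (R \<times> M) (\<lambda>_. {-1, 0, 1})"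
  proof
    fix z assume z: "z \<in> sign_directions R M"
    then have "z = (\<lambda>r k. if r \<in> R \<and> k \<in> M then restrict (case_prod z) (R \<times> M) (r, k) else 0)"
      by (auto simp: sign_directions_def fun_eq_iff)
    moreover have "restrict (case_prod z) (R \<times> M) \<in> PiE (R \<times> M) (\<lambda>_. {-1, 0, 1})"
      using z by (auto simp: sign_directions_def)
    ultimately show "z \<in> (\<lambda>g r k. if r \<in> R \<and> k \<in> M then g (r, k) else 0) ` PiE (R \<times> M) (\<lambda>_. {-1, 0, 1})"
      by blast
  qed
qed (use assms in \<open>simp add: finite_PiE\<close>)

lemma prob_space_unit_uniform: "prob_space (uniform_measure lborel {0..1::real})"
  by (rule prob_space_uniform_measure) simp_all

lemma emeasure_unit_uniform_singleton: "emeasure (uniform_measure lborel {0..1::real}) {v} = 0"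
proof -
  have "emeasure lborel ({0..1} \<inter> {v}) = 0"
    by (cases "v \<in> {0..1}") simp_all
  then show ?thesis by (simp add: emeasure_uniform_measure)
qed

lemma AE_cost_distr_lp_cost_nonzero:
  assumes "finite R" and "finite M" and "r \<in> R" and "k \<in> M" and "z r k \<noteq> 0"
  shows "AE c in cost_distr R M. lp_cost R M c z \<noteq> 0"
proof -
  have "lp_cost R M c z = (\<Sum>q\<in>R \<times> M. c q * case_prod z q)" for c
    by (simp add: lp_cost_def sum.cartesian_product case_prod_beta)
  moreover have "AE c in cost_distr R M. (\<Sum>q\<in>R \<times> M. c q * case_prod z q) \<noteq> 0"
    unfolding cost_distr_def
    by (rule AE_PiM_linear_form_nonzero[where i = "(r, k)", OF prob_space_imp_sigma_finite[OF prob_space_unit_uniform]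
          trans[OF sets_uniform_measure sets_lborel] emeasure_unit_uniform_singleton])
      (use assms in simp_all)
  ultimately show ?thesis by simp
qed

lemma AE_cost_distr_sign_directions:
  assumes "finite R" and "finite M"
  shows "AE c in cost_distr R M. \<forall>z\<in>sign_directions R M.
           (\<exists>r\<in>R. \<exists>k\<in>M. z r k \<noteq> 0) \<longrightarrow> lp_cost R M c z \<noteq> 0"
proof (rule AE_finite_allI[OF finite_sign_directions[OF assms]])
  fix z
  show "AE c in cost_distr R M. (\<exists>r\<in>R. \<exists>k\<in>M. z r k \<noteq> 0) \<longrightarrow> lp_cost R M c z \<noteq> 0"
  proof (rule AE_impI)
    assume "\<exists>r\<in>R. \<exists>k\<in>M. z r k \<noteq> 0"
    then obtain r k where "r \<in> R" "k \<in> M" "z r k \<noteq> 0" by blast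
    then show "AE c in cost_distr R M. lp_cost R M c z \<noteq> 0"
      by (rule AE_cost_distr_lp_cost_nonzero[OF assms])
  qed
qed

lemma AE_lp_optimal_in_sched_set:
  assumes "finite R" and "finite M" and \<delta>: "\<forall>r k. \<delta> r k \<in> {0, 1}"
  shows "AE c in cost_distr R M. \<forall>x. lp_optimal R M \<delta> d c x \<longrightarrow> x \<in> sched_set R M \<delta> d"
  using AE_cost_distr_sign_directions[OF assms(1,2)]
proof (rule eventually_mono, intro allI impI)
  fix c x
  assume generic: "\<forall>z\<in>sign_directions R M. (\<exists>r\<in>R. \<exists>k\<in>M. z r k \<noteq> 0) \<longrightarrow> lp_cost R M c z \<noteq> 0"
    and opt: "lp_optimal R M \<delta> d c x"
  then have feasible: "relaxed_feasible R M \<delta> d x" by (simp add: lp_optimal_def)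
  show "x \<in> sched_set R M \<delta> d"
  proof (rule ccontr)
    assume "x \<notin> sched_set R M \<delta> d"
    then obtain r k where "r \<in> R" "k \<in> M" "x r k \<notin> {0, 1}"
      using feasible unfolding sched_set_def by blast
    then obtain z where "z \<in> sign_directions R M" "\<exists>r\<in>R. \<exists>k\<in>M. z r k \<noteq> 0"
      and "\<forall>\<^sub>F t in nhds 0. relaxed_feasible R M \<delta> d (\<lambda>r k. x r k + t * z r k)"
      using fractional_relaxed_feasible_direction[OF assms feasible] by blast
    moreover from this(3) have "lp_cost R M c z = 0"
      by (rule lp_optimal_two_sided_direction[OF opt])
    ultimately show False using generic by blast
  qed
qed

theorem theorem2:
  fixes R :: "'r set" and M :: "'k set"
    and \<delta> :: "'r \<Rightarrow> 'k \<Rightarrow> real" and d :: "'k \<Rightarrow> nat"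
  assumes "finite R" and "finite M"
    and "\<forall>r k. \<delta> r k \<in> {0, 1}"
    and "\<forall>k\<in>M. d k > 0"
  shows "((\<exists>x. relaxed_feasible R M \<delta> d x) \<longleftrightarrow> sched_set R M \<delta> d \<noteq> {}) \<and>
         (sched_set R M \<delta> d \<noteq> {} \<longrightarrow>
            (AE c in cost_distr R M.
               (\<exists>x. lp_optimal R M \<delta> d c x) \<and>
               (\<forall>x. lp_optimal R M \<delta> d c x \<longrightarrow> x \<in> sched_set R M \<delta> d)))"
proof -
  interpret prob_space "cost_distr R M"
    unfolding cost_distr_def by (intro prob_space_PiM prob_space_unit_uniform)
  have integral: "AE c in cost_distr R M. \<forall>x. lp_optimal R M \<delta> d c x \<longrightarrow> x \<in> sched_set R M \<delta> d"
    using AE_lp_optimal_in_sched_set[OF assms(1-3)] .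
  obtain c where c: "\<forall>x. lp_optimal R M \<delta> d c x \<longrightarrow> x \<in> sched_set R M \<delta> d"
    using eventually_happens'[OF ae_filter_bot integral] by blast
  have "sched_set R M \<delta> d \<noteq> {}" if "relaxed_feasible R M \<delta> d y" for y
    using lp_optimal_exists[OF that, of c] c by blast
  moreover have "relaxed_feasible R M \<delta> d x" if "x \<in> sched_set R M \<delta> d" for x
    using that by (simp add: sched_set_def)
  ultimately have feasible_iff: "(\<exists>x. relaxed_feasible R M \<delta> d x) \<longleftrightarrow> sched_set R M \<delta> d \<noteq> {}"
    by blast
  show ?thesis
  proof (intro conjI impI)
    assume "sched_set R M \<delta> d \<noteq> {}"
    then obtain y where "relaxed_feasible R M \<delta> d y" using feasible_iff by blast
    from integral show "AE c in cost_distr R M. (\<exists>x. lp_optimal R M \<delta> d c x) \<and>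
        (\<forall>x. lp_optimal R M \<delta> d c x \<longrightarrow> x \<in> sched_set R M \<delta> d)"
      by (rule eventually_mono) (use lp_optimal_exists[OF \<open>relaxed_feasible R M \<delta> d y\<close>] in blast)
  qed (fact feasible_iff)
qed

end
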